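(* Let $q>2$ be a prime power, let $n\ge1$ with $\gcd(n,q-1)=1$, let $f(x)$ be a monic irreducible polynomial of degree $n$ over $\mathbb{F}_q$, and let $\theta$ be a primitive element of $\mathbb{F}_q$. Let $R(x)$ be the remainder of $x^q-\theta x$ modulo $f(x)$, and let $\psi(x)=\sum_{u=0}^{n}\psi_u x^u\in\mathbb{F}_q[x]$ be the monic nonzero polynomial of least degree satisfying $$\sum_{u=0}^{n}\psi_u\,(R(x))^u\equiv 0\pmod{f(x)}.$$ Then $\psi(x)$ is an irreducible polynomial of degree $n$ over $\mathbb{F}_q$, and $F(x)=\psi(x^q-\theta x)/f(x)$ is an irreducible polynomial of degree $n(q-1)$ over $\mathbb{F}_q$.
   Context: A primitive element of $\mathbb{F}_q$ is a generator of the cyclic group $\mathbb{F}_q^*$. *)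

theory Defs
  imports "HOL-Computational_Algebra.Computational_Algebra"
begin

definition primitive_element :: "'a::field \<Rightarrow> bool" where
  "primitive_element \<theta> \<longleftrightarrow> \<theta> \<noteq> 0 \<and> (\<forall>x. x \<noteq> 0 \<longrightarrow> (\<exists>k::nat. x = \<theta> ^ k))"

end

theory Submission
  imports Defs "HOL-Library.Cardinality" "HOL-Algebra.Algebraic_Closure_Type" "HOL-Algebra.Sylow"
begin

text \<open>
  Notation: \<open>q = CARD('a)\<close>, \<open>L(x) = x^q - \<theta> x\<close> (the constant \<open>linearized \<theta>\<close>), \<open>\<alpha>\<close> a root of \<open>f\<close>
  in the algebraic closure and \<open>\<beta> = L(\<alpha>)\<close>.  Since \<open>f\<close> is the minimal polynomial of \<open>\<alpha>\<close>, we have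
  \<open>f dvd g(R)\<close> iff \<open>g(\<beta>) = 0\<close>, so \<open>\<psi>\<close> is the minimal polynomial of \<open>\<beta>\<close> and is irreducible.
  The key tool is the Frobenius criterion: a root \<open>a\<close> of an irreducible \<open>h\<close> satisfies
  \<open>a^(q^t) = a\<close> (for \<open>t > 0\<close>) iff \<open>degree h dvd t\<close>.  As \<open>L\<close> commutes with Frobenius,
  \<open>\<beta>^(q^n) = \<beta>\<close>, so \<open>d = degree \<psi>\<close> divides \<open>n\<close>; conversely \<open>\<delta> = \<alpha>^(q^d) - \<alpha>\<close> is in the kernel
  of \<open>L\<close>, whence \<open>\<delta> = \<delta>^(q^n) = \<theta>^n \<delta>\<close>, and \<open>\<theta>^n \<noteq> 1\<close> forces \<open>\<delta> = 0\<close>, i.e. \<open>n dvd d\<close>.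
  For \<open>F = \<psi>(L(x)) div f\<close> pick \<open>\<gamma>\<close> with \<open>\<gamma>^(q-1) = \<theta>\<close>: then \<open>L(\<gamma>) = 0\<close> and \<open>\<rho> = \<alpha> + \<gamma>\<close> is a root
  of \<open>\<psi>(L(x))\<close> but not of \<open>f\<close>.  If \<open>k\<close> is the degree of the minimal polynomial of \<open>\<rho>\<close>, then
  \<open>\<rho>^(q^k) = \<rho>\<close> gives \<open>n dvd k\<close>, hence \<open>\<alpha>^(q^k) = \<alpha>\<close> and \<open>\<theta>^k = 1\<close>, so \<open>n (q-1) dvd k\<close>;
  as \<open>F(\<rho>) = 0\<close> and \<open>degree F = n (q-1)\<close>, \<open>F\<close> is irreducible.
\<close>

text \<open>The algebraic closure lives in HOL-Algebra, whose polynomial notions would shadow the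
  type-class ones used here.\<close>
hide_const (open) Divisibility.prime Divisibility.irreducible Polynomials.degree
  up_ring.monom up_ring.coeff Polynomials.lead_coeff module.smult

text \<open>Lagrange's argument in a finite multiplicatively closed subset of a field: multiplication
  by a nonzero element permutes the nonzero elements.  Used for the ground field itself and
  for the field generated by a root.\<close>
lemma power_card_mult_closed:
  fixes S :: "'b::field set"
  assumes fin: "finite S" and zero: "0 \<in> S" and a: "a \<in> S"
    and mult: "\<And>u v. u \<in> S \<Longrightarrow> v \<in> S \<Longrightarrow> u * v \<in> S"
  shows "a ^ card S = a"
proof (cases "a = 0")
  case True
  then show ?thesis using fin a card_gt_0_iff by force
next
  case False
  define T where "T = S - {0}"
  have finT: "finite T" using fin by (simp add: T_def)
  have perm: "(\<lambda>v. a * v) ` T = T"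
  proof (rule endo_inj_surj[OF finT])
    show "(\<lambda>v. a * v) ` T \<subseteq> T" using mult a False by (auto simp: T_def)
    show "inj_on (\<lambda>v. a * v) T" using False by (auto intro: inj_onI)
  qed
  have "\<Prod>T = (\<Prod>v\<in>T. a * v)"
    by (subst (1) perm[symmetric], subst prod.reindex) (use False in \<open>auto intro: inj_onI\<close>)
  also have "\<dots> = a ^ card T * \<Prod>T" by (simp add: prod.distrib)
  finally have "a ^ card T = 1" using finT by (simp add: T_def)
  moreover have "card S = Suc (card T)" using fin zero by (simp add: T_def card_Suc_Diff1 del: card_Diff_insert)
  ultimately show ?thesis by simp
qed

lemma power_card_eq_self: "(x :: 'a::{finite,field}) ^ CARD('a) = x"
  by (rule power_card_mult_closed) auto

lemma power_card_power_eq_self: "(x :: 'a::{finite,field}) ^ (CARD('a) ^ t) = x"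
  by (induction t) (simp_all add: power_card_eq_self power_mult)

lemma prime_CHAR_finite: "prime CHAR('a::{finite,field})"
  by (rule prime_CHAR_semidom) (rule finite_imp_CHAR_pos, simp)

lemma one_less_card_field: "1 < CARD('a::{finite,field})"
  using card_mono[of "UNIV :: 'a set" "{0, 1}"] by simp

text \<open>The additive group of a ring, as a HOL-Algebra group, to apply Cauchy's theorem.\<close>
definition additive_group :: "'b::ab_group_add monoid" where
  "additive_group = \<lparr>carrier = UNIV, monoid.mult = (+), one = 0\<rparr>"

lemma group_additive_group: "group additive_group"
  unfolding additive_group_def
  by (rule groupI) (auto simp: add.assoc intro: exI[of _ "- _"])

lemma additive_group_pow: "x [^]\<^bsub>additive_group\<^esub> (n::nat) = of_nat n * (x :: 'b::ring_1)"
  by (induction n) (auto simp: additive_group_def algebra_simps)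

text \<open>The only prime dividing the order of a finite field is its characteristic: a prime
  \<open>r\<close> dividing the order yields (Sylow/Cauchy) an element \<open>x \<noteq> 0\<close> with \<open>r x = 0\<close>.\<close>
lemma prime_dvd_card_eq_CHAR:
  assumes r: "prime r" "r dvd CARD('a::{finite,field})"
  shows "r = CHAR('a)"
proof -
  interpret G: group "additive_group :: 'a monoid" by (rule group_additive_group)
  obtain m where "CARD('a) = r * m" using r(2) by blast
  then have "order (additive_group :: 'a monoid) = r ^ 1 * m"
    by (simp add: order_def additive_group_def)
  moreover have "finite (carrier (additive_group :: 'a monoid))"
    by (simp add: additive_group_def)
  ultimately obtain H :: "'a set" where H: "subgroup H additive_group" "card H = r"
    using sylow_thm[OF r(1) group_additive_group] by fastforce
  have "\<not> H \<subseteq> {0}"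
    using H(2) prime_gt_1_nat[OF r(1)] card_mono[of "{0::'a}" H] by auto
  then obtain x where x: "x \<in> H" "x \<noteq> 0" by blast
  have "x [^]\<^bsub>additive_group\<lparr>carrier := H\<rparr>\<^esub> order (additive_group\<lparr>carrier := H\<rparr>)
          = \<one>\<^bsub>additive_group\<lparr>carrier := H\<rparr>\<^esub>"
    using G.subgroup_imp_group[OF H(1)] x(1) by (intro group.pow_order_eq_1) auto
  then have "x [^]\<^bsub>additive_group\<^esub> r = (0 :: 'a)"
    using H(2) G.nat_pow_consistent[of x r H] x(1)
    by (simp add: order_def additive_group_def)
  then have "of_nat r * x = 0" by (simp add: additive_group_pow)
  then have "CHAR('a) dvd r" using x(2) by (simp add: of_nat_eq_0_iff_char_dvd)
  then show ?thesis using primes_dvd_imp_eq[OF prime_CHAR_finite[where 'a='a] r(1)] by simp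
qed

lemma card_eq_CHAR_power: "\<exists>m. CARD('a::{finite,field}) = CHAR('a) ^ m"
proof -
  have "CARD('a) \<noteq> 0" by simp
  then obtain y where y: "CARD('a) = CHAR('a) ^ multiplicity CHAR('a) CARD('a) * y"
      "\<not> CHAR('a) dvd y"
    using multiplicity_decompose'[of "CARD('a)" "CHAR('a)"] prime_CHAR_finite[where 'a='a]
    by (metis not_prime_unit)
  have "y = 1"
  proof (rule ccontr)
    assume "y \<noteq> 1"
    then obtain r where r: "prime r" "r dvd y" using prime_factor_nat by blast
    then have "r dvd CARD('a)" using y(1) by (metis dvd_mult_left dvd_trans dvd_triv_right)
    then have "r = CHAR('a)" by (rule prime_dvd_card_eq_CHAR[OF r(1)])
    with r(2) y(2) show False by simp
  qed
  with y(1) show ?thesis by auto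
qed

lemma primitive_element_power_eq_1:
  fixes \<theta> :: "'a::{finite,field}"
  assumes prim: "primitive_element \<theta>" and k: "\<theta> ^ k = 1"
  shows "(CARD('a) - 1) dvd k"
proof (rule ccontr)
  define r where "r = k mod (CARD('a) - 1)"
  assume "\<not> (CARD('a) - 1) dvd k"
  then have r0: "r > 0" by (simp add: r_def dvd_eq_mod_eq_0)
  have r_less: "r < CARD('a) - 1" using one_less_card_field[where 'a='a] by (simp add: r_def)
  have "\<theta> * \<theta> ^ (CARD('a) - 1) = \<theta> * 1"
    using power_card_eq_self[of \<theta>] one_less_card_field[where 'a='a] by (simp flip: power_Suc)
  then have "\<theta> ^ (CARD('a) - 1) = 1" using prim by (simp add: primitive_element_def)
  moreover have "\<theta> ^ k = (\<theta> ^ (CARD('a) - 1)) ^ (k div (CARD('a) - 1)) * \<theta> ^ r"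
    unfolding r_def by (simp flip: power_mult power_add)
  ultimately have \<theta>r: "\<theta> ^ r = 1" using k by simp
  have "UNIV - {0} \<subseteq> (\<lambda>i. \<theta> ^ i) ` {..<r}"
  proof
    fix x :: 'a assume "x \<in> UNIV - {0}"
    then obtain j where "x = \<theta> ^ j" using prim by (auto simp: primitive_element_def)
    moreover have "\<theta> ^ j = (\<theta> ^ r) ^ (j div r) * \<theta> ^ (j mod r)"
      by (simp flip: power_mult power_add)
    ultimately show "x \<in> (\<lambda>i. \<theta> ^ i) ` {..<r}" using \<theta>r r0 by auto
  qed
  then have "CARD('a) - 1 \<le> card ((\<lambda>i. \<theta> ^ i) ` {..<r})"
    using card_mono[of "(\<lambda>i. \<theta> ^ i) ` {..<r}" "UNIV - {0}"] by (simp add: card_Diff_singleton)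
  also have "\<dots> \<le> r" using card_image_le[of "{..<r}" "\<lambda>i. \<theta> ^ i"] by simp
  finally show False using r_less by simp
qed

lemma power_power_fixed_mult:
  fixes x :: "'b::monoid_mult"
  assumes "x ^ (N ^ t) = x"
  shows "x ^ (N ^ (t * j)) = x"
proof (induction j)
  case (Suc j)
  have "N ^ (t * Suc j) = N ^ (t * j) * N ^ t"
    by (simp only: mult_Suc_right power_add mult.commute)
  then have "x ^ (N ^ (t * Suc j)) = (x ^ (N ^ (t * j))) ^ (N ^ t)"
    by (simp only: power_mult)
  with Suc assms show ?case by simp
qed simp

lemma power_power_fixed_gcd:
  fixes x :: "'b::monoid_mult"
  shows "x ^ (N ^ s) = x \<Longrightarrow> x ^ (N ^ t) = x \<Longrightarrow> x ^ (N ^ gcd s t) = x"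
proof (induction s t rule: gcd_nat_induct)
  case (step s t)
  have "x ^ (N ^ s) = (x ^ (N ^ (t * (s div t)))) ^ (N ^ (s mod t))"
    by (simp flip: power_mult power_add)
  then have "x ^ (N ^ (s mod t)) = x"
    using step.prems power_power_fixed_mult[OF step.prems(2)] by simp
  then have "x ^ (N ^ gcd t (s mod t)) = x" using step by blast
  then show ?case by (simp add: gcd_red_nat[of s t])
qed simp

lemma power_power_eigen:
  fixes x c :: "'b::comm_monoid_mult"
  assumes "x ^ N = c * x" "c ^ N = c"
  shows "x ^ (N ^ t) = c ^ t * x"
proof (induction t)
  case (Suc t)
  have "x ^ (N ^ Suc t) = (x ^ (N ^ t)) ^ N" by (simp only: power_Suc2 power_mult)
  also have "\<dots> = (c ^ t) ^ N * x ^ N" by (simp only: Suc power_mult_distrib)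
  also have "(c ^ t) ^ N = (c ^ N) ^ t" by (simp only: mult.commute flip: power_mult)
  finally show ?case using assms by (simp add: mult_ac)
qed simp

definition aeval :: "'b::field poly \<Rightarrow> 'b alg_closure \<Rightarrow> 'b alg_closure" where
  "aeval g a = poly (map_poly to_ac g) a"

lemma map_poly_to_ac_add: "map_poly to_ac (g + h) = map_poly to_ac g + map_poly to_ac h"
  by (rule poly_eqI) (simp add: coeff_map_poly)

lemma map_poly_to_ac_mult: "map_poly to_ac (g * h) = map_poly to_ac g * map_poly to_ac h"
  by (rule poly_eqI) (simp add: coeff_map_poly coeff_mult to_ac_sum)

lemma aeval_0 [simp]: "aeval 0 a = 0"
  and aeval_add [simp]: "aeval (g + h) a = aeval g a + aeval h a"
  and aeval_mult [simp]: "aeval (g * h) a = aeval g a * aeval h a"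
  and aeval_pCons [simp]: "aeval (pCons c g) a = to_ac c + a * aeval g a"
  and aeval_smult [simp]: "aeval (smult c g) a = to_ac c * aeval g a"
  and aeval_monom [simp]: "aeval (monom c k) a = to_ac c * a ^ k"
  by (simp_all add: aeval_def map_poly_to_ac_add map_poly_to_ac_mult map_poly_pCons
      map_poly_smult map_poly_monom poly_monom)

lemma aeval_diff [simp]: "aeval (g - h) a = aeval g a - aeval h a"
  using aeval_add[of "g - h" h a] by (simp add: algebra_simps)

lemma aeval_const [simp]: "aeval [:c:] a = to_ac c"
  by simp

lemma aeval_pcompose [simp]: "aeval (pcompose g h) a = aeval g (aeval h a)"
  by (induction g rule: pCons_induct) (auto simp: pcompose_pCons)

lemma aeval_mod: "aeval f a = 0 \<Longrightarrow> aeval (g mod f) a = aeval g a"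
  using aeval_add[of "f * (g div f)" "g mod f" a] by simp

lemma aeval_const_poly_nonzero: "degree g = 0 \<Longrightarrow> g \<noteq> 0 \<Longrightarrow> aeval g a \<noteq> 0"
  by (metis degree_eq_zeroE aeval_const pCons_eq_0_iff to_ac_eq_0_iff)

text \<open>The \<open>q^t\<close>-power map is additive on the algebraic closure, because \<open>q\<close> is a power of the
  characteristic; and it commutes with evaluation of polynomials over \<open>\<bbbF>\<^sub>q\<close>.\<close>
lemma frobenius_add:
  fixes x y :: "'a::{finite,field} alg_closure"
  shows "(x + y) ^ (CARD('a) ^ t) = x ^ (CARD('a) ^ t) + y ^ (CARD('a) ^ t)"
proof -
  obtain m where "CARD('a) = CHAR('a) ^ m" using card_eq_CHAR_power by blast
  then have "CARD('a) ^ t = CHAR('a alg_closure) ^ (m * t)" by (simp add: power_mult)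
  then show ?thesis using prime_CHAR_finite[where 'a='a] by (intro freshmans_dream') simp_all
qed

lemma frobenius_diff:
  fixes x y :: "'a::{finite,field} alg_closure"
  shows "(x - y) ^ (CARD('a) ^ t) = x ^ (CARD('a) ^ t) - y ^ (CARD('a) ^ t)"
  using frobenius_add[of "x - y" y t] by (simp add: algebra_simps)

lemma aeval_frobenius:
  fixes g :: "'a::{finite,field} poly"
  shows "aeval g (a ^ (CARD('a) ^ t)) = aeval g a ^ (CARD('a) ^ t)"
proof (induction g rule: pCons_induct)
  case (pCons c g)
  have "to_ac c ^ (CARD('a) ^ t) = to_ac c"
    by (metis power_card_power_eq_self to_ac_power)
  with pCons show ?case by (simp add: frobenius_add power_mult_distrib)
qed simp

lemma least_degree_root_irreducible:
  fixes h :: "'b::field poly"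
  assumes h: "h \<noteq> 0" "aeval h a = 0"
    and least: "\<And>g. g \<noteq> 0 \<Longrightarrow> aeval g a = 0 \<Longrightarrow> degree h \<le> degree g"
  shows "irreducible h"
proof (rule Factorial_Ring.irreducibleI)
  have "degree h \<noteq> 0" using aeval_const_poly_nonzero h by blast
  then show "\<not> is_unit h" using h(1) by (auto simp: is_unit_iff_degree)
  fix x y assume hxy: "h = x * y"
  with h(1) have nz: "x \<noteq> 0" "y \<noteq> 0" by auto
  with hxy have deg: "degree h = degree x + degree y" by (simp add: degree_mult_eq)
  from hxy h(2) have "aeval x a = 0 \<or> aeval y a = 0" by simp
  then have "degree y = 0 \<or> degree x = 0" using least nz deg by force
  then show "is_unit x \<or> is_unit y" using nz by (auto simp: is_unit_iff_degree)
qed fact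

lemma least_degree_root_dvd:
  fixes m h :: "'b::field poly"
  assumes m: "m \<noteq> 0" "aeval m a = 0"
    and least: "\<And>g. g \<noteq> 0 \<Longrightarrow> aeval g a = 0 \<Longrightarrow> degree m \<le> degree g"
    and h: "aeval h a = 0"
  shows "m dvd h"
proof -
  have "aeval (h mod m) a = 0" using m h by (simp add: aeval_mod)
  then have "h mod m = 0" using least degree_mod_less[OF m(1), of h] by force
  then show ?thesis by (simp add: mod_eq_0_iff_dvd)
qed

lemma irreducible_root_dvd_iff:
  fixes f g :: "'b::field poly"
  assumes irr: "irreducible f" and root: "aeval f a = 0"
  shows "aeval g a = 0 \<longleftrightarrow> f dvd g"
proof
  assume g: "aeval g a = 0"
  have "f \<noteq> 0" using irr by auto
  then obtain m where m: "m \<noteq> 0" "aeval m a = 0"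
    and least: "\<And>h. h \<noteq> 0 \<Longrightarrow> aeval h a = 0 \<Longrightarrow> degree m \<le> degree h"
    using ex_has_least_nat[of "\<lambda>h. h \<noteq> 0 \<and> aeval h a = 0" f degree] root by blast
  obtain k where fk: "f = m * k" using least_degree_root_dvd[OF m least root] by blast
  have "\<not> is_unit m" using aeval_const_poly_nonzero m by (auto simp: is_unit_iff_degree)
  then have "is_unit k" using irr fk Factorial_Ring.irreducibleD by blast
  then have "f dvd m" using fk by simp
  also have "m dvd g" by (rule least_degree_root_dvd[OF m least g])
  finally show "f dvd g" .
qed (auto simp: root elim!: dvdE)

lemma irreducible_degree_pos: "irreducible (h :: 'b::field poly) \<Longrightarrow> degree h > 0"
  by (metis Factorial_Ring.irreducible_def is_unit_iff_degree gr0I)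

lemma irreducible_if_degree_le_root_irreducible:
  fixes F h :: "'b::field poly"
  assumes F: "F \<noteq> 0" "aeval F \<rho> = 0" and h: "irreducible h" "aeval h \<rho> = 0"
    and deg: "degree F \<le> degree h"
  shows "irreducible F"
proof -
  obtain u where Fu: "F = h * u" using irreducible_root_dvd_iff[OF h] F(2) by blast
  with F(1) have "u \<noteq> 0" by auto
  with Fu F(1) deg have "degree u = 0" by (simp add: degree_mult_eq)
  with \<open>u \<noteq> 0\<close> have "is_unit u" by (simp add: is_unit_iff_degree)
  then show ?thesis using h(1) Fu irreducible_mult_unit_left[of u h] by (simp add: mult.commute)
qed

lemma card_degree_less:
  assumes "k > 0"
  shows "finite {g :: 'a::{finite,field} poly. degree g < k}"
    and "card {g :: 'a poly. degree g < k} = CARD('a) ^ k"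
proof -
  have "bij_betw Poly {xs :: 'a list. set xs \<subseteq> UNIV \<and> length xs = k} {g. degree g < k}"
  proof (rule bij_betw_imageI)
    show "inj_on Poly {xs :: 'a list. set xs \<subseteq> UNIV \<and> length xs = k}"
    proof (rule inj_onI)
      fix xs ys :: "'a list"
      assume "xs \<in> {xs. set xs \<subseteq> UNIV \<and> length xs = k}" "ys \<in> {xs. set xs \<subseteq> UNIV \<and> length xs = k}"
        and "Poly xs = Poly ys"
      then show "xs = ys"
        by (metis (mono_tags, lifting) coeff_Poly_eq mem_Collect_eq nth_default_nth nth_equalityI)
    qed
    show "Poly ` {xs. set xs \<subseteq> UNIV \<and> length xs = k} = {g :: 'a poly. degree g < k}"
    proof (intro equalityI subsetI)
      fix g :: "'a poly" assume "g \<in> Poly ` {xs. set xs \<subseteq> UNIV \<and> length xs = k}"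
      then obtain xs where "g = Poly xs" "length xs = k" by auto
      then have "degree g \<le> k - 1"
        by (intro degree_le) (auto simp: nth_default_def)
      then show "g \<in> {g. degree g < k}" using assms by simp
    next
      fix g :: "'a poly" assume "g \<in> {g. degree g < k}"
      then have "length (coeffs g) \<le> k"
        using assms by (cases "g = 0") (auto simp: length_coeffs_degree)
      then have "g = Poly (coeffs g @ replicate (k - length (coeffs g)) 0)"
        "length (coeffs g @ replicate (k - length (coeffs g)) 0) = k"
        by simp_all
      then show "g \<in> Poly ` {xs. set xs \<subseteq> UNIV \<and> length xs = k}" by blast
    qed
  qed
  then show "finite {g :: 'a poly. degree g < k}" "card {g :: 'a poly. degree g < k} = CARD('a) ^ k"
    using finite_lists_length_eq[of "UNIV :: 'a set" k] card_lists_length_eq[of "UNIV :: 'a set" k]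
    by (auto simp: bij_betw_finite bij_betw_same_card)
qed

text \<open>The field \<open>\<bbbF>\<^sub>q[a]\<close> generated by \<open>a\<close>, as the values at \<open>a\<close> of the polynomials of degree
  below \<open>k\<close>; for \<open>k\<close> the degree of the minimal polynomial this is all of \<open>\<bbbF>\<^sub>q[a]\<close>, and it has
  \<open>q^k\<close> elements.\<close>
definition adjoin :: "'b::field alg_closure \<Rightarrow> nat \<Rightarrow> 'b alg_closure set" where
  "adjoin a k = (\<lambda>g. aeval g a) ` {g. degree g < k}"

lemma aeval_in_adjoin:
  assumes "h \<noteq> 0" "aeval h a = 0"
  shows "aeval g a \<in> adjoin a (degree h)"
proof -
  have "degree h \<noteq> 0" using assms aeval_const_poly_nonzero by blast
  then have "g mod h \<in> {g. degree g < degree h}"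
    using degree_mod_less[OF assms(1), of g] by auto
  moreover have "aeval g a = aeval (g mod h) a" using assms(2) by (simp add: aeval_mod)
  ultimately show ?thesis unfolding adjoin_def by blast
qed

lemma card_adjoin:
  fixes h :: "'a::{finite,field} poly"
  assumes irr: "irreducible h" and root: "aeval h a = 0"
  shows "finite (adjoin a (degree h))" and "card (adjoin a (degree h)) = CARD('a) ^ degree h"
proof -
  have "inj_on (\<lambda>g. aeval g a) {g. degree g < degree h}"
  proof (rule inj_onI)
    fix g1 g2 assume g: "g1 \<in> {g. degree g < degree h}" "g2 \<in> {g. degree g < degree h}"
      and "aeval g1 a = aeval g2 a"
    then have "h dvd g1 - g2" using irreducible_root_dvd_iff[OF irr root, of "g1 - g2"] by simp
    moreover have "degree (g1 - g2) < degree h"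
      using g degree_diff_le_max[of g1 g2] by auto
    ultimately show "g1 = g2" by (metis divides_degree leD eq_iff_diff_eq_0)
  qed
  then show "finite (adjoin a (degree h))" "card (adjoin a (degree h)) = CARD('a) ^ degree h"
    using card_degree_less[OF irreducible_degree_pos[OF irr], where 'a='a]
    by (simp_all add: adjoin_def card_image)
qed

text \<open>The Frobenius criterion, part one: a root of an irreducible \<open>h\<close> is fixed by
  \<open>x \<mapsto> x^(q^(degree h))\<close>, by Lagrange's argument in \<open>\<bbbF>\<^sub>q[a]\<close>.\<close>
lemma root_power_card_degree:
  fixes h :: "'a::{finite,field} poly"
  assumes irr: "irreducible h" and root: "aeval h a = 0"
  shows "a ^ (CARD('a) ^ degree h) = a"
proof -
  have h0: "h \<noteq> 0" using irr by auto
  have "a ^ card (adjoin a (degree h)) = a"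
  proof (rule power_card_mult_closed)
    show "0 \<in> adjoin a (degree h)" "a \<in> adjoin a (degree h)"
      using aeval_in_adjoin[OF h0 root, of 0] aeval_in_adjoin[OF h0 root, of "[:0, 1:]"] by simp_all
    fix u v assume "u \<in> adjoin a (degree h)" "v \<in> adjoin a (degree h)"
    then obtain g1 g2 where "u = aeval g1 a" "v = aeval g2 a" by (auto simp: adjoin_def)
    then show "u * v \<in> adjoin a (degree h)" using aeval_in_adjoin[OF h0 root, of "g1 * g2"] by simp
  qed (rule card_adjoin[OF irr root])
  then show ?thesis using card_adjoin[OF irr root] by simp
qed

text \<open>Part two: if \<open>a^(q^t) = a\<close>, then all \<open>q^(degree h)\<close> elements of \<open>\<bbbF>\<^sub>q[a]\<close> are roots of
  \<open>x^(q^t) - x\<close>, so \<open>degree h \<le> t\<close>.\<close>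
lemma degree_le_of_power_fixed:
  fixes h :: "'a::{finite,field} poly"
  assumes irr: "irreducible h" and root: "aeval h a = 0"
    and fixed: "a ^ (CARD('a) ^ t) = a" and t: "t > 0"
  shows "degree h \<le> t"
proof -
  define P :: "'a alg_closure poly" where "P = monom 1 (CARD('a) ^ t) - [:0, 1:]"
  have q: "1 < CARD('a)" by (rule one_less_card_field)
  then have Q: "1 < CARD('a) ^ t" using t by (metis one_less_power)
  have P0: "P \<noteq> 0"
  proof
    assume "P = 0"
    then have "degree (monom (1 :: 'a alg_closure) (CARD('a) ^ t)) = degree [:0, 1 :: 'a alg_closure:]"
      by (simp add: P_def)
    with t q show False by (simp add: degree_monom_eq)
  qed
  have "degree P \<le> CARD('a) ^ t"
    unfolding P_def using Q by (intro degree_diff_le degree_monom_le) auto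
  have "adjoin a (degree h) \<subseteq> {y. poly P y = 0}"
  proof
    fix y assume "y \<in> adjoin a (degree h)"
    then obtain g where "y = aeval g a" by (auto simp: adjoin_def)
    then have "y ^ (CARD('a) ^ t) = y" using aeval_frobenius[of g a t] fixed by simp
    then show "y \<in> {y. poly P y = 0}" by (simp add: P_def poly_monom)
  qed
  then have "CARD('a) ^ degree h \<le> card {y. poly P y = 0}"
    using card_adjoin[OF irr root] card_mono[OF poly_roots_finite[OF P0]] by metis
  also have "\<dots> \<le> CARD('a) ^ t"
    using card_poly_roots_bound[OF P0] \<open>degree P \<le> CARD('a) ^ t\<close> by linarith
  finally show ?thesis using \<open>1 < CARD('a)\<close> by simp
qed

lemma degree_dvd_of_power_fixed:
  fixes h :: "'a::{finite,field} poly"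
  assumes irr: "irreducible h" and root: "aeval h a = 0"
    and fixed: "a ^ (CARD('a) ^ t) = a" and t: "t > 0"
  shows "degree h dvd t"
proof -
  have "a ^ (CARD('a) ^ gcd t (degree h)) = a"
    using power_power_fixed_gcd[OF fixed root_power_card_degree[OF irr root]] .
  then have "degree h \<le> gcd t (degree h)"
    using degree_le_of_power_fixed[OF irr root] t by simp
  then have "gcd t (degree h) = degree h"
    using gcd_le2_nat[of "degree h" t] irreducible_degree_pos[OF irr] by linarith
  then show ?thesis using gcd_dvd1[of t "degree h"] by simp
qed

definition linearized :: "'a::{finite,field} \<Rightarrow> 'a poly" where
  "linearized \<theta> = monom 1 CARD('a) - smult \<theta> [:0, 1:]"

lemma aeval_linearized:
  fixes \<theta> :: "'a::{finite,field}"
  shows "aeval (linearized \<theta>) x = x ^ CARD('a) - to_ac \<theta> * x"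
  by (simp add: linearized_def)

lemma aeval_linearized_add:
  fixes \<theta> :: "'a::{finite,field}"
  shows "aeval (linearized \<theta>) (x + y) = aeval (linearized \<theta>) x + aeval (linearized \<theta>) y"
  using frobenius_add[of x y 1] by (simp add: aeval_linearized algebra_simps)

lemma aeval_linearized_diff:
  fixes \<theta> :: "'a::{finite,field}"
  shows "aeval (linearized \<theta>) (x - y) = aeval (linearized \<theta>) x - aeval (linearized \<theta>) y"
  using frobenius_diff[of x y 1] by (simp add: aeval_linearized algebra_simps)

lemma degree_linearized: "degree (linearized (\<theta> :: 'a::{finite,field})) = CARD('a)"
proof -
  have "degree (- smult \<theta> [:0, 1:]) < degree (monom (1::'a) CARD('a))"
    using one_less_card_field[where 'a='a] by (simp add: degree_monom_eq)
  then show ?thesis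
    unfolding linearized_def diff_conv_add_uminus by (simp add: degree_add_eq_left degree_monom_eq)
qed

lemma linearized_kernel_power:
  fixes \<theta> :: "'a::{finite,field}"
  assumes "aeval (linearized \<theta>) x = 0"
  shows "x ^ (CARD('a) ^ t) = to_ac \<theta> ^ t * x"
proof (rule power_power_eigen)
  show "x ^ CARD('a) = to_ac \<theta> * x" using assms by (simp add: aeval_linearized)
  show "to_ac \<theta> ^ CARD('a) = to_ac \<theta>" by (simp flip: to_ac_power add: power_card_eq_self)
qed

lemma aeval_linearized_root:
  fixes \<theta> :: "'a::{finite,field}"
  assumes "\<gamma> ^ (CARD('a) - 1) = to_ac \<theta>"
  shows "aeval (linearized \<theta>) \<gamma> = 0"
proof -
  have "\<gamma> ^ CARD('a) = \<gamma> ^ (CARD('a) - 1) * \<gamma>"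
    using one_less_card_field[where 'a='a] by (simp flip: power_Suc2)
  then show ?thesis using assms by (simp add: aeval_linearized)
qed

lemma primitive_element_power_coprime:
  fixes \<theta> :: "'a::{finite,field}"
  assumes "primitive_element \<theta>" "coprime n (CARD('a) - 1)" "to_ac \<theta> ^ (n * j) = 1"
  shows "(CARD('a) - 1) dvd j"
proof -
  have "\<theta> ^ (n * j) = 1" using assms(3) by (metis to_ac_1 to_ac_eq_iff to_ac_power)
  then have "(CARD('a) - 1) dvd n * j" by (rule primitive_element_power_eq_1[OF assms(1)])
  with assms(2) show ?thesis by (simp add: coprime_commute coprime_dvd_mult_right_iff)
qed

lemma degree_minimal_polynomial_linearized_image:
  fixes f \<psi> :: "'a::{finite,field} poly" and \<theta> :: 'a
  assumes f: "irreducible f" "aeval f \<alpha> = 0"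
    and prim: "primitive_element \<theta>" and q: "CARD('a) > 2"
    and coprime: "coprime (degree f) (CARD('a) - 1)"
    and \<psi>: "irreducible \<psi>" "aeval \<psi> (aeval (linearized \<theta>) \<alpha>) = 0"
  shows "degree \<psi> = degree f"
proof -
  define L where "L = linearized \<theta>"
  define n where "n = degree f"
  define d where "d = degree \<psi>"
  have \<alpha>_fixed: "\<alpha> ^ (CARD('a) ^ n) = \<alpha>" unfolding n_def by (rule root_power_card_degree[OF f])
  have "aeval L \<alpha> ^ (CARD('a) ^ n) = aeval L \<alpha>" using aeval_frobenius[of L \<alpha> n] \<alpha>_fixed by simp
  then have "d dvd n"
    unfolding d_def using degree_dvd_of_power_fixed[OF \<psi>[folded L_def]] irreducible_degree_pos[OF f(1)]
    by (simp add: n_def)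
  define \<delta> where "\<delta> = \<alpha> ^ (CARD('a) ^ d) - \<alpha>"
  have "aeval L \<delta> = aeval L \<alpha> ^ (CARD('a) ^ d) - aeval L \<alpha>"
    unfolding \<delta>_def L_def aeval_linearized_diff aeval_frobenius ..
  then have "aeval L \<delta> = 0" using root_power_card_degree[OF \<psi>[folded L_def]] by (simp add: d_def)
  then have "\<delta> ^ (CARD('a) ^ n) = to_ac \<theta> ^ n * \<delta>" unfolding L_def by (rule linearized_kernel_power)
  moreover have "\<delta> ^ (CARD('a) ^ n) = \<delta>"
  proof -
    have "(\<alpha> ^ (CARD('a) ^ d)) ^ (CARD('a) ^ n) = (\<alpha> ^ (CARD('a) ^ n)) ^ (CARD('a) ^ d)"
      by (simp only: mult.commute flip: power_mult)
    then show ?thesis unfolding \<delta>_def frobenius_diff \<alpha>_fixed by simp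
  qed
  moreover have "to_ac \<theta> ^ (n * 1) \<noteq> 1"
    using primitive_element_power_coprime[OF prim, of n 1] coprime q by (auto simp: n_def)
  ultimately have "\<delta> = 0" by (metis mult_cancel_right2 mult_1_right)
  then have "\<alpha> ^ (CARD('a) ^ d) = \<alpha>" by (simp add: \<delta>_def)
  then have "n dvd d"
    unfolding n_def using degree_dvd_of_power_fixed[OF f] irreducible_degree_pos[OF \<psi>(1)]
    by (simp add: d_def)
  with \<open>d dvd n\<close> show ?thesis by (simp add: d_def n_def dvd_antisym)
qed

lemma degree_minimal_polynomial_shifted_root:
  fixes f \<psi> h :: "'a::{finite,field} poly" and \<theta> :: 'a
  assumes f: "irreducible f" "aeval f \<alpha> = 0"
    and prim: "primitive_element \<theta>" and coprime: "coprime (degree f) (CARD('a) - 1)"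
    and \<psi>: "irreducible \<psi>" "degree \<psi> = degree f" "aeval \<psi> (aeval (linearized \<theta>) \<alpha>) = 0"
    and \<gamma>: "\<gamma> ^ (CARD('a) - 1) = to_ac \<theta>"
    and h: "irreducible h" "aeval h (\<alpha> + \<gamma>) = 0"
  shows "degree f * (CARD('a) - 1) dvd degree h"
proof -
  define L where "L = linearized \<theta>"
  define k where "k = degree h"
  have "\<theta> \<noteq> 0" using prim by (simp add: primitive_element_def)
  moreover have "CARD('a) - 1 \<noteq> 0" using one_less_card_field[where 'a='a] by simp
  ultimately have "\<gamma> \<noteq> 0" using \<gamma> by (auto simp: power_0_left)
  have L\<gamma>: "aeval L \<gamma> = 0" unfolding L_def by (rule aeval_linearized_root[OF \<gamma>])
  then have L\<rho>: "aeval L (\<alpha> + \<gamma>) = aeval L \<alpha>" by (simp add: L_def aeval_linearized_add)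
  have \<rho>_fixed: "(\<alpha> + \<gamma>) ^ (CARD('a) ^ k) = \<alpha> + \<gamma>" unfolding k_def by (rule root_power_card_degree[OF h])
  then have "aeval L \<alpha> ^ (CARD('a) ^ k) = aeval L \<alpha>" using aeval_frobenius[of L "\<alpha> + \<gamma>" k] L\<rho> by simp
  then have "degree f dvd k"
    using degree_dvd_of_power_fixed[OF \<psi>(1) \<psi>(3)[folded L_def]] irreducible_degree_pos[OF h(1)]
    by (simp add: k_def \<psi>(2))
  then obtain j where kj: "k = degree f * j" by blast
  have "\<alpha> ^ (CARD('a) ^ k) = \<alpha>"
    unfolding kj by (rule power_power_fixed_mult[OF root_power_card_degree[OF f]])
  moreover have "\<gamma> ^ (CARD('a) ^ k) = to_ac \<theta> ^ k * \<gamma>"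
    using L\<gamma> unfolding L_def by (rule linearized_kernel_power)
  ultimately have "\<alpha> + to_ac \<theta> ^ k * \<gamma> = \<alpha> + 1 * \<gamma>" using \<rho>_fixed by (simp add: frobenius_add)
  then have "to_ac \<theta> ^ (degree f * j) = 1" using \<open>\<gamma> \<noteq> 0\<close> kj by simp
  then have "(CARD('a) - 1) dvd j" by (rule primitive_element_power_coprime[OF prim coprime])
  then show ?thesis using kj by (simp add: k_def)
qed

lemma linearized_composition_dvd:
  fixes f \<psi> :: "'a::{finite,field} poly" and \<theta> :: 'a
  assumes f: "irreducible f" "aeval f \<alpha> = 0"
    and \<psi>: "degree \<psi> = degree f" "aeval \<psi> (aeval (linearized \<theta>) \<alpha>) = 0"
  shows "f dvd pcompose \<psi> (linearized \<theta>)"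
    and "degree (pcompose \<psi> (linearized \<theta>) div f) = degree f * (CARD('a) - 1)"
proof -
  define G where "G = pcompose \<psi> (linearized \<theta>)"
  have "aeval G \<alpha> = 0" using \<psi>(2) by (simp add: G_def)
  then have "f dvd G" using irreducible_root_dvd_iff[OF f, of G] by blast
  then show "f dvd pcompose \<psi> (linearized \<theta>)" by (simp add: G_def)
  have deg_G: "degree G = degree f * CARD('a)"
    by (simp add: G_def degree_pcompose degree_linearized \<psi>(1))
  moreover have "degree f > 0" by (rule irreducible_degree_pos[OF f(1)])
  ultimately have "G \<noteq> 0" by auto
  with \<open>f dvd G\<close> have "G = f * (G div f)" "G div f \<noteq> 0" "f \<noteq> 0" by auto
  then have "degree G = degree f + degree (G div f)" by (metis degree_mult_eq)
  with deg_G show "degree (pcompose \<psi> (linearized \<theta>) div f) = degree f * (CARD('a) - 1)"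
    by (simp add: G_def diff_mult_distrib2)
qed

text \<open>Second half: \<open>\<psi>(L(x)) div f\<close> is irreducible, since it vanishes at \<open>\<alpha> + \<gamma>\<close>, whose
  minimal polynomial has degree at least \<open>n (q-1)\<close>.\<close>
lemma linearized_composition_quotient_irreducible:
  fixes f \<psi> :: "'a::{finite,field} poly" and \<theta> :: 'a
  assumes f: "irreducible f" "aeval f \<alpha> = 0"
    and prim: "primitive_element \<theta>" and q: "CARD('a) > 2"
    and coprime: "coprime (degree f) (CARD('a) - 1)"
    and \<psi>: "irreducible \<psi>" "degree \<psi> = degree f" "aeval \<psi> (aeval (linearized \<theta>) \<alpha>) = 0"
  shows "irreducible (pcompose \<psi> (linearized \<theta>) div f)"
proof -
  define G where "G = pcompose \<psi> (linearized \<theta>)"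
  define n where "n = degree f"
  have G: "G = f * (G div f)" "degree (G div f) = n * (CARD('a) - 1)"
    using linearized_composition_dvd[OF f \<psi>(2,3)] by (simp_all add: G_def n_def)
  have "n > 0" unfolding n_def by (rule irreducible_degree_pos[OF f(1)])
  with q G(2) have "G div f \<noteq> 0" "f \<noteq> 0" "G \<noteq> 0" using f(1) by (auto simp: G(1)[symmetric])
  obtain \<gamma> where \<gamma>: "\<gamma> ^ (CARD('a) - 1) = to_ac \<theta>"
    using nth_root_exists[of "CARD('a) - 1" "to_ac \<theta>"] q by auto
  define \<rho> where "\<rho> = \<alpha> + \<gamma>"
  have "aeval G \<rho> = 0"
    using \<psi>(3) aeval_linearized_root[OF \<gamma>] by (simp add: G_def \<rho>_def aeval_linearized_add)
  then obtain h where h: "h \<noteq> 0" "aeval h \<rho> = 0"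
    and least: "\<And>g. g \<noteq> 0 \<Longrightarrow> aeval g \<rho> = 0 \<Longrightarrow> degree h \<le> degree g"
    using ex_has_least_nat[of "\<lambda>h. h \<noteq> 0 \<and> aeval h \<rho> = 0" G degree] \<open>G \<noteq> 0\<close> by blast
  have h_irr: "irreducible h" by (rule least_degree_root_irreducible[OF h least])
  have "n * (CARD('a) - 1) dvd degree h"
    using degree_minimal_polynomial_shifted_root[OF f prim coprime \<psi> \<gamma> h_irr] h(2)
    by (simp add: \<rho>_def n_def)
  then have deg_h: "n * (CARD('a) - 1) \<le> degree h"
    using irreducible_degree_pos[OF h_irr] by (simp add: dvd_imp_le)
  have "aeval f \<rho> \<noteq> 0"
  proof
    assume "aeval f \<rho> = 0"
    then have "degree h \<le> n" using least \<open>f \<noteq> 0\<close> by (simp add: n_def)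
    moreover have "n * 1 < n * (CARD('a) - 1)" using q \<open>n > 0\<close> by (intro mult_strict_left_mono) auto
    ultimately show False using deg_h by linarith
  qed
  with \<open>aeval G \<rho> = 0\<close> G(1) have "aeval (G div f) \<rho> = 0" by (metis aeval_mult mult_eq_0_iff)
  then show ?thesis
    using irreducible_if_degree_le_root_irreducible[OF \<open>G div f \<noteq> 0\<close> _ h_irr h(2)] G(2) deg_h
    by (simp add: G_def)
qed

theorem mainTheorem7:
  fixes f \<psi> :: "'a::{finite,field} poly" and \<theta> :: 'a and n :: nat
  defines "q \<equiv> card (UNIV :: 'a set)"
  defines "R \<equiv> (monom 1 q - smult \<theta> [:0, 1:]) mod f"
  assumes q_gt: "q > 2"
    and n_ge: "n \<ge> 1"
    and coprime: "gcd n (q - 1) = 1"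
    and f_monic: "lead_coeff f = 1"
    and f_irr: "irreducible f"
    and f_deg: "degree f = n"
    and prim: "primitive_element \<theta>"
    and psi_nz: "\<psi> \<noteq> 0"
    and psi_monic: "lead_coeff \<psi> = 1"
    and psi_ann: "f dvd pcompose \<psi> R"
    and psi_min: "\<And>g. g \<noteq> 0 \<Longrightarrow> f dvd pcompose g R \<Longrightarrow> degree \<psi> \<le> degree g"
  shows "irreducible \<psi> \<and> degree \<psi> = n
         \<and> f dvd pcompose \<psi> (monom 1 q - smult \<theta> [:0, 1:])
         \<and> irreducible (pcompose \<psi> (monom 1 q - smult \<theta> [:0, 1:]) div f)
         \<and> degree (pcompose \<psi> (monom 1 q - smult \<theta> [:0, 1:]) div f) = n * (q - 1)"
proof -
  have L: "monom 1 q - smult \<theta> [:0, 1:] = linearized \<theta>" by (simp add: q_def linearized_def)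
  obtain \<alpha> where \<alpha>: "aeval f \<alpha> = 0"
    using alg_closed_imp_poly_has_root[of "map_poly to_ac f"] f_deg n_ge
    by (auto simp: aeval_def degree_map_poly)
  have "aeval R \<alpha> = aeval (linearized \<theta>) \<alpha>" unfolding R_def L by (rule aeval_mod[OF \<alpha>])
  then have annihilates: "f dvd pcompose g R \<longleftrightarrow> aeval g (aeval (linearized \<theta>) \<alpha>) = 0" for g
    using irreducible_root_dvd_iff[OF f_irr \<alpha>, of "pcompose g R"] by simp
  have \<psi>_root: "aeval \<psi> (aeval (linearized \<theta>) \<alpha>) = 0" using psi_ann annihilates by blast
  have \<psi>_irr: "irreducible \<psi>"
    using least_degree_root_irreducible[OF psi_nz \<psi>_root] psi_min annihilates by blast
  have cop: "coprime (degree f) (CARD('a) - 1)" using coprime f_deg by (simp add: q_def coprime_iff_gcd_eq_1)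
  have \<psi>_deg: "degree \<psi> = degree f"
    using degree_minimal_polynomial_linearized_image[OF f_irr \<alpha> prim _ cop \<psi>_irr \<psi>_root] q_gt
    by (simp add: q_def)
  show ?thesis
    unfolding L
    using \<psi>_irr \<psi>_deg linearized_composition_dvd[OF f_irr \<alpha> \<psi>_deg \<psi>_root]
      linearized_composition_quotient_irreducible[OF f_irr \<alpha> prim _ cop \<psi>_irr \<psi>_deg \<psi>_root] q_gt
    by (simp add: f_deg q_def)
qed

end
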